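(* Let $A, B, A', B'$ be countable sets, let $\mu_1 \in \mathcal{D}(A)$, $\mu_2 \in \mathcal{D}(B)$, and let $f \colon A \to \mathcal{D}(A')$, $g \colon B \to \mathcal{D}(B')$. Let $\Xi \subseteq A$ be a predicate, let $\Phi_1, \Phi_2 \subseteq A \times B$ and $\Psi \subseteq A' \times B'$ be relations, and assume $\Phi_1, \Phi_2$ are disjoint in the sense that for all $a, a' \in A$ and $b \in B$, if $a \in \Xi$ and $a' \notin \Xi$ then $(a,b) \notin \Phi_1$ or $(a',b) \notin \Phi_2$. Let $\varepsilon_1, \varepsilon_2, \varepsilon_1', \varepsilon_2', \delta_1, \delta_2, \delta_1', \delta_2' \geq 0$ be real numbers, and assume: (i) $\mu_1 \sim_{\varepsilon_1,\delta_1} \mu_2 : \Phi_1$; (ii) $\mu_1 \sim_{\varepsilon_2,\delta_2} \mu_2 : \Phi_2$; (iii) for all $a \in A$, $b \in B$ with $a \in \Xi$ and $(a,b) \in \Phi_1$, we have $f(a) \sim_{\varepsilon_1',\delta_1'} g(b) : \Psi$; (iv) for all $a \in A$, $b \in B$ with $a \notin \Xi$ and $(a,b) \in \Phi_2$, we have $f(a) \sim_{\varepsilon_2',\delta_2'} g(b) : \Psi$. Then $(\mu_1 \mathbin{>\!\!>\!\!=} f) \sim_{\varepsilon,\delta} (\mu_2 \mathbin{>\!\!>\!\!=} g) : \Psi$, where $\varepsilon = \max(\varepsilon_1 + \varepsilon_1', \varepsilon_2 + \varepsilon_2')$ and $\delta = \delta_1 + \delta_2 + \max(\delta_1', \delt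a_2')$.
   Context: For a countable set $A$, a (sub)distribution on $A$ is a function $\mu \colon A \to [0,1]$ with $\sum_{a \in A} \mu(a) \leq 1$; $\mathcal{D}(A)$ denotes the set of such. For $\mu \in \mathcal{D}(A)$ and $h \colon A \to \mathcal{D}(B)$, the bind is $(\mu \mathbin{>\!\!>\!\!=} h)(b) = \sum_{a \in A} \mu(a)\, h(a)(b)$. For a function $F \colon A \to [0,1]$, its expectation is $\mathbb{E}_\mu[F] = \sum_{a \in A} \mu(a) F(a)$. Approximate coupling: for countable $A, B$, a relation $\Phi \subseteq A \times B$, reals $\varepsilon, \delta \geq 0$, and $\mu_1 \in \mathcal{D}(A)$, $\mu_2 \in \mathcal{D}(B)$, we write $\mu_1 \sim_{\varepsilon,\delta} \mu_2 : \Phi$ (an $(\varepsilon,\delta)$-approximate $\Phi$-coupling exists) if for all functions $F \colon A \to [0,1]$ and $G \colon B \to [0,1]$ such that $F(a) \leq G(b)$ for all $(a,b) \in \Phi$, we have $\mathbb{E}_{\mu_1}[F] \leq e^{\varepsilon} \cdot \mathbb{E}_{\mu_2}[G] + \delta$. *)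

theory Defs
  imports "HOL-Probability.Probability"
begin

text \<open>Subdistributions on a countable set are modelled by sub-probability mass
  functions (type spmf); the value at a is spmf mu a, and bind is bind_spmf,
  whose mass function is exactly the sum of mu(a) * h(a)(b).\<close>

definition expect :: "'a spmf \<Rightarrow> ('a \<Rightarrow> real) \<Rightarrow> real" where
  "expect \<mu> F = (\<Sum>\<^sub>\<infinity>a. spmf \<mu> a * F a)"

definition approx_coupling ::
  "real \<Rightarrow> real \<Rightarrow> 'a spmf \<Rightarrow> 'b spmf \<Rightarrow> ('a \<times> 'b) set \<Rightarrow> bool" where
  "approx_coupling \<epsilon> \<delta> \<mu>1 \<mu>2 \<Phi> \<longleftrightarrow>
     (\<forall>F G. (\<forall>a. 0 \<le> F a \<and> F a \<le> 1) \<longrightarrow> (\<forall>b. 0 \<le> G b \<and> G b \<le> 1) \<longrightarrow>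
        (\<forall>a b. (a, b) \<in> \<Phi> \<longrightarrow> F a \<le> G b) \<longrightarrow>
        expect \<mu>1 F \<le> exp \<epsilon> * expect \<mu>2 G + \<delta>)"

end

theory Submission
  imports Defs
begin

text \<open>Write \<open>F' a\<close> and \<open>G' b\<close> for the expectations of the test functions \<open>F\<close> and \<open>G\<close> under
  \<open>f a\<close> and \<open>g b\<close>. Split the first distribution along \<open>\<Xi>\<close> and the second along the
  \<open>\<Phi>1\<close>-image \<open>S\<close> of \<open>\<Xi>\<close>; the disjointness hypothesis says exactly that \<open>\<Phi>2\<close> relates points
  outside \<open>\<Xi>\<close> only to points outside \<open>S\<close>. On each half the usual sequential composition
  argument applies: the inner coupling gives \<open>F' a \<le> exp \<epsilon>' * G' b + \<delta>'\<close>, so subtracting \<open>\<delta>'\<close>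
  from \<open>F'\<close> and capping \<open>exp \<epsilon>' * G'\<close> at 1 yields a pair of test functions for the outer
  coupling. Adding the two halves pays the inner additive error only once, as \<open>max \<delta>1' \<delta>2'\<close>.\<close>

lemma integrable_measure_spmf_bounded:
  fixes F :: "'a \<Rightarrow> real"
  assumes "\<And>x. \<bar>F x\<bar> \<le> B"
  shows "integrable (measure_spmf p) F"
  by (rule measure_spmf.integrable_const_bound[where B=B]) (use assms in auto)

lemma expect_eq_integral:
  fixes F :: "'a \<Rightarrow> real"
  assumes "\<And>x. \<bar>F x\<bar> \<le> B"
  shows "expect p F = (\<integral>x. F x \<partial>measure_spmf p)"
proof -
  have int: "integrable (measure_spmf p) F"
    using assms by (rule integrable_measure_spmf_bounded)
  then have "integrable (count_space UNIV) (\<lambda>x. spmf p x * F x)"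
    by (simp add: integrable_iff_bounded nn_integral_measure_spmf abs_mult ennreal_mult'')
  then have "expect p F = infsetsum (\<lambda>x. spmf p x * F x) UNIV"
    unfolding expect_def
    by (intro infsetsum_infsum[symmetric]) (simp add: Infinite_Set_Sum.abs_summable_on_def)
  also have "\<dots> = (\<integral>x. F x \<partial>measure_spmf p)"
    by (simp add: infsetsum_def integral_measure_spmf[OF int])
  finally show ?thesis .
qed

lemma expect_mono:
  fixes F G :: "'a \<Rightarrow> real"
  assumes "\<And>x. \<bar>F x\<bar> \<le> B" "\<And>x. \<bar>G x\<bar> \<le> B" "\<And>x. F x \<le> G x"
  shows "expect p F \<le> expect p G"
  unfolding expect_eq_integral[OF assms(1)] expect_eq_integral[OF assms(2)]
  using assms by (intro integral_mono integrable_measure_spmf_bounded)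

lemma expect_add:
  fixes F G :: "'a \<Rightarrow> real"
  assumes F: "\<And>x. \<bar>F x\<bar> \<le> B" and G: "\<And>x. \<bar>G x\<bar> \<le> B"
  shows "expect p (\<lambda>x. F x + G x) = expect p F + expect p G"
proof -
  have "\<bar>F x + G x\<bar> \<le> 2 * B" for x
    using F[of x] G[of x] by linarith
  then have "expect p (\<lambda>x. F x + G x) = (\<integral>x. F x + G x \<partial>measure_spmf p)"
    by (rule expect_eq_integral)
  also have "\<dots> = (\<integral>x. F x \<partial>measure_spmf p) + (\<integral>x. G x \<partial>measure_spmf p)"
    using F G by (intro Bochner_Integration.integral_add integrable_measure_spmf_bounded)
  also have "\<dots> = expect p F + expect p G"
    using expect_eq_integral[where F=F, OF F] expect_eq_integral[where F=G, OF G] by simp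
  finally show ?thesis .
qed

lemma expect_cmult: "expect p (\<lambda>x. c * F x) = c * expect p F"
  unfolding expect_def by (simp add: mult.left_commute infsum_cmult_right')

lemma expect_const: "expect p (\<lambda>_. c) = c * weight_spmf p"
  by (simp add: expect_eq_integral[where B="\<bar>c\<bar>"] weight_spmf_def)

lemma expect_nonneg: "(\<And>x. 0 \<le> F x) \<Longrightarrow> 0 \<le> expect p F"
  unfolding expect_def by (simp add: infsum_nonneg)

lemma expect_abs_le:
  assumes "\<And>x. \<bar>F x\<bar> \<le> B"
  shows "\<bar>expect p F\<bar> \<le> B"
proof -
  have "0 \<le> B"
    using assms[of undefined] by linarith
  have "\<bar>expect p F\<bar> = max (expect p F) (expect p (\<lambda>x. - F x))"
    using expect_cmult[of p "-1" F] by simp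
  also have "\<dots> \<le> expect p (\<lambda>_. B)"
    using assms \<open>0 \<le> B\<close> by (auto intro!: expect_mono[where B=B] simp: abs_le_iff)
  also have "\<dots> \<le> B"
    using \<open>0 \<le> B\<close> weight_spmf_le_1[of p] by (simp add: expect_const mult_left_le)
  finally show ?thesis .
qed

lemma expect_unit_interval:
  assumes "\<And>x. 0 \<le> F x \<and> F x \<le> 1"
  shows "0 \<le> expect p F \<and> expect p F \<le> 1"
proof
  show "0 \<le> expect p F"
    using assms by (simp add: expect_nonneg)
  show "expect p F \<le> 1"
    using expect_abs_le[of F 1 p] assms by fastforce
qed

lemma expect_bind_spmf:
  fixes F :: "'b \<Rightarrow> real"
  assumes bound: "\<And>x. \<bar>F x\<bar> \<le> B"
  shows "expect (bind_spmf p f) F = expect p (\<lambda>a. expect (f a) F)"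
proof -
  have inner: "expect (f a) F = (\<integral>x. F x \<partial>measure_spmf (f a))" for a
    using bound by (rule expect_eq_integral)
  have inner_bound: "\<bar>expect (f a) F\<bar> \<le> B" for a
    using bound by (rule expect_abs_le)
  have "expect (bind_spmf p f) F = (\<integral>x. F x \<partial>measure_spmf (bind_spmf p f))"
    using bound by (rule expect_eq_integral)
  also have "\<dots> = (\<integral>a. (\<integral>x. F x \<partial>measure_spmf (f a)) \<partial>measure_spmf p)"
    unfolding measure_spmf_bind
    by (rule trans[OF integral_bind[where K="count_space UNIV" and B=B and B'=1]])
      (use bound in \<open>auto intro: measure_spmf.subprob_emeasure_le_1\<close>)
  also have "\<dots> = expect p (\<lambda>a. expect (f a) F)"
    unfolding inner using inner_bound[unfolded inner] by (rule expect_eq_integral[symmetric])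
  finally show ?thesis .
qed

lemma approx_couplingI:
  assumes "\<And>F G. (\<And>a. 0 \<le> F a \<and> F a \<le> 1) \<Longrightarrow> (\<And>b. 0 \<le> G b \<and> G b \<le> 1) \<Longrightarrow>
             (\<And>a b. (a, b) \<in> \<Phi> \<Longrightarrow> F a \<le> G b) \<Longrightarrow>
             expect \<mu>1 F \<le> exp \<epsilon> * expect \<mu>2 G + \<delta>"
  shows "approx_coupling \<epsilon> \<delta> \<mu>1 \<mu>2 \<Phi>"
  using assms unfolding approx_coupling_def by blast

lemma approx_couplingD:
  assumes "approx_coupling \<epsilon> \<delta> \<mu>1 \<mu>2 \<Phi>"
    and "\<And>a. 0 \<le> F a \<and> F a \<le> 1" "\<And>b. 0 \<le> G b \<and> G b \<le> 1"
    and "\<And>a b. (a, b) \<in> \<Phi> \<Longrightarrow> F a \<le> G b"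
  shows "expect \<mu>1 F \<le> exp \<epsilon> * expect \<mu>2 G + \<delta>"
  using assms unfolding approx_coupling_def by blast

lemma approx_coupling_restrict_le:
  fixes F :: "'a \<Rightarrow> real" and G :: "'b \<Rightarrow> real"
  assumes coupling: "approx_coupling \<epsilon> \<delta> \<mu>1 \<mu>2 \<Phi>" and "0 \<le> \<delta>'"
    and F01: "\<And>a. 0 \<le> F a \<and> F a \<le> 1" and G01: "\<And>b. 0 \<le> G b \<and> G b \<le> 1"
    and related: "\<And>a b. a \<in> A \<Longrightarrow> (a, b) \<in> \<Phi> \<Longrightarrow> b \<in> B \<and> F a \<le> exp \<epsilon>' * G b + \<delta>'"
  shows "expect \<mu>1 (\<lambda>a. indicator A a * max 0 (F a - \<delta>'))
           \<le> exp (\<epsilon> + \<epsilon>') * expect \<mu>2 (\<lambda>b. indicator B b * G b) + \<delta>"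
proof -
  define G' where "G' b = indicator B b * min 1 (exp \<epsilon>' * G b)" for b
  have "expect \<mu>1 (\<lambda>a. indicator A a * max 0 (F a - \<delta>')) \<le> exp \<epsilon> * expect \<mu>2 G' + \<delta>"
  proof (rule approx_couplingD[OF coupling])
    show "0 \<le> indicator A a * max 0 (F a - \<delta>') \<and> indicator A a * max 0 (F a - \<delta>') \<le> 1" for a
      using F01[of a] \<open>0 \<le> \<delta>'\<close> by (simp split: split_indicator)
    show "0 \<le> G' b \<and> G' b \<le> 1" for b
      using G01[of b] by (simp add: G'_def split: split_indicator)
    show "indicator A a * max 0 (F a - \<delta>') \<le> G' b" if "(a, b) \<in> \<Phi>" for a b
      using related[OF _ that] F01[of a] G01[of b] \<open>0 \<le> \<delta>'\<close>
      by (cases "a \<in> A") (auto simp: G'_def split: split_indicator)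
  qed
  moreover have "expect \<mu>2 G' \<le> expect \<mu>2 (\<lambda>b. exp \<epsilon>' * (indicator B b * G b))"
    using G01 by (intro expect_mono[where B="exp \<epsilon>'"])
      (auto simp: G'_def mult_left_le min.coboundedI2 split: split_indicator)
  ultimately show ?thesis
    by (simp add: expect_cmult exp_add order.trans)
qed

lemma expect_le_by_partition:
  fixes F :: "'a \<Rightarrow> real" and G :: "'b \<Rightarrow> real"
  assumes F01: "\<And>a. 0 \<le> F a \<and> F a \<le> 1" and G01: "\<And>b. 0 \<le> G b \<and> G b \<le> 1"
    and "0 \<le> \<delta>1'" "0 \<le> \<delta>2'"
    and le1: "expect \<mu>1 (\<lambda>a. indicator A a * max 0 (F a - \<delta>1'))
                \<le> exp \<epsilon>1 * expect \<mu>2 (\<lambda>b. indicator B b * G b) + \<delta>1"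
    and le2: "expect \<mu>1 (\<lambda>a. indicator (- A) a * max 0 (F a - \<delta>2'))
                \<le> exp \<epsilon>2 * expect \<mu>2 (\<lambda>b. indicator (- B) b * G b) + \<delta>2"
  shows "expect \<mu>1 F \<le> exp (max \<epsilon>1 \<epsilon>2) * expect \<mu>2 G + (\<delta>1 + \<delta>2 + max \<delta>1' \<delta>2')"
proof -
  define \<delta>' where "\<delta>' = max \<delta>1' \<delta>2'"
  define F1 where "F1 a = indicator A a * max 0 (F a - \<delta>1')" for a
  define F2 where "F2 a = indicator (- A) a * max 0 (F a - \<delta>2')" for a
  define G1 where "G1 b = indicator B b * G b" for b
  define G2 where "G2 b = indicator (- B) b * G b" for b
  have \<delta>': "\<delta>1' \<le> \<delta>'" "\<delta>2' \<le> \<delta>'" "0 \<le> \<delta>'"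
    using assms(3) by (auto simp: \<delta>'_def)
  have bounds: "\<bar>F1 a\<bar> \<le> 1" "\<bar>F2 a\<bar> \<le> 1" "\<bar>G1 b\<bar> \<le> 1" "\<bar>G2 b\<bar> \<le> 1" for a b
    using F01[of a] G01[of b] assms(3,4)
    by (simp_all add: F1_def F2_def G1_def G2_def split: split_indicator)
  have "F a \<le> F1 a + F2 a + \<delta>'" "\<bar>F a\<bar> \<le> 2 + \<delta>'" "\<bar>F1 a + F2 a + \<delta>'\<bar> \<le> 2 + \<delta>'" for a
    using F01[of a] \<delta>' bounds(1,2)[of a]
    by (auto simp: F1_def F2_def split: split_indicator)
  then have "expect \<mu>1 F \<le> expect \<mu>1 (\<lambda>a. (F1 a + F2 a) + \<delta>')"
    by (intro expect_mono[where B="2 + \<delta>'"])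
  also have "\<dots> = expect \<mu>1 F1 + expect \<mu>1 F2 + \<delta>' * weight_spmf \<mu>1"
  proof -
    have "\<bar>F1 a + F2 a\<bar> \<le> 2 + \<delta>'" "\<bar>\<delta>'\<bar> \<le> 2 + \<delta>'" for a
      using bounds(1,2)[of a] \<delta>' by auto
    then have "expect \<mu>1 (\<lambda>a. (F1 a + F2 a) + \<delta>') = expect \<mu>1 (\<lambda>a. F1 a + F2 a) + expect \<mu>1 (\<lambda>_. \<delta>')"
      by (rule expect_add)
    also have "expect \<mu>1 (\<lambda>a. F1 a + F2 a) = expect \<mu>1 F1 + expect \<mu>1 F2"
      using bounds(1,2) by (rule expect_add)
    finally show ?thesis
      by (simp add: expect_const)
  qed
  also have "\<dots> \<le> (exp \<epsilon>1 * expect \<mu>2 G1 + \<delta>1) + (exp \<epsilon>2 * expect \<mu>2 G2 + \<delta>2) + \<delta>'"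
  proof -
    have "\<delta>' * weight_spmf \<mu>1 \<le> \<delta>'"
      using \<delta>'(3) weight_spmf_le_1[of \<mu>1] by (simp add: mult_left_le)
    then show ?thesis
      using le1 le2 unfolding F1_def[abs_def] F2_def[abs_def] G1_def[abs_def] G2_def[abs_def]
      by linarith
  qed
  also have "\<dots> \<le> exp (max \<epsilon>1 \<epsilon>2) * (expect \<mu>2 G1 + expect \<mu>2 G2) + (\<delta>1 + \<delta>2 + \<delta>')"
    using G01 by (simp add: distrib_left add_mono mult_right_mono expect_nonneg G1_def G2_def)
  also have "expect \<mu>2 G1 + expect \<mu>2 G2 = expect \<mu>2 (\<lambda>b. G1 b + G2 b)"
    using bounds(3,4) by (rule expect_add[symmetric])
  also have "(\<lambda>b. G1 b + G2 b) = G"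
    by (rule ext) (simp add: G1_def G2_def split: split_indicator)
  finally show ?thesis
    unfolding \<delta>'_def .
qed

theorem theorem5p2:
  fixes \<mu>1 :: "'a::countable spmf" and \<mu>2 :: "'b::countable spmf"
    and f :: "'a \<Rightarrow> 'c::countable spmf" and g :: "'b \<Rightarrow> 'd::countable spmf"
    and \<Xi> :: "'a set" and \<Phi>1 \<Phi>2 :: "('a \<times> 'b) set" and \<Psi> :: "('c \<times> 'd) set"
    and \<epsilon>1 \<epsilon>2 \<epsilon>1' \<epsilon>2' \<delta>1 \<delta>2 \<delta>1' \<delta>2' :: real
  assumes disj: "\<And>a a' b. a \<in> \<Xi> \<Longrightarrow> a' \<notin> \<Xi> \<Longrightarrow> (a, b) \<notin> \<Phi>1 \<or> (a', b) \<notin> \<Phi>2"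
    and nonneg: "0 \<le> \<epsilon>1" "0 \<le> \<epsilon>2" "0 \<le> \<epsilon>1'" "0 \<le> \<epsilon>2'"
                "0 \<le> \<delta>1" "0 \<le> \<delta>2" "0 \<le> \<delta>1'" "0 \<le> \<delta>2'"
    and i: "approx_coupling \<epsilon>1 \<delta>1 \<mu>1 \<mu>2 \<Phi>1"
    and ii: "approx_coupling \<epsilon>2 \<delta>2 \<mu>1 \<mu>2 \<Phi>2"
    and iii: "\<And>a b. a \<in> \<Xi> \<Longrightarrow> (a, b) \<in> \<Phi>1 \<Longrightarrow> approx_coupling \<epsilon>1' \<delta>1' (f a) (g b) \<Psi>"
    and iv: "\<And>a b. a \<notin> \<Xi> \<Longrightarrow> (a, b) \<in> \<Phi>2 \<Longrightarrow> approx_coupling \<epsilon>2' \<delta>2' (f a) (g b) \<Psi>"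
  shows "approx_coupling (max (\<epsilon>1 + \<epsilon>1') (\<epsilon>2 + \<epsilon>2')) (\<delta>1 + \<delta>2 + max \<delta>1' \<delta>2')
           (bind_spmf \<mu>1 f) (bind_spmf \<mu>2 g) \<Psi>"
proof (rule approx_couplingI)
  fix F :: "'c \<Rightarrow> real" and G :: "'d \<Rightarrow> real"
  assume F01: "\<And>x. 0 \<le> F x \<and> F x \<le> 1" and G01: "\<And>y. 0 \<le> G y \<and> G y \<le> 1"
    and FG: "\<And>x y. (x, y) \<in> \<Psi> \<Longrightarrow> F x \<le> G y"
  define F' where "F' a = expect (f a) F" for a
  define G' where "G' b = expect (g b) G" for b
  define S where "S = {b. \<exists>a\<in>\<Xi>. (a, b) \<in> \<Phi>1}"
  have F'01: "0 \<le> F' a \<and> F' a \<le> 1" for a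
    unfolding F'_def using F01 by (rule expect_unit_interval)
  have G'01: "0 \<le> G' b \<and> G' b \<le> 1" for b
    unfolding G'_def using G01 by (rule expect_unit_interval)
  have "expect \<mu>1 (\<lambda>a. indicator \<Xi> a * max 0 (F' a - \<delta>1'))
          \<le> exp (\<epsilon>1 + \<epsilon>1') * expect \<mu>2 (\<lambda>b. indicator S b * G' b) + \<delta>1"
    using i nonneg(7) F'01 G'01
  proof (rule approx_coupling_restrict_le)
    show "b \<in> S \<and> F' a \<le> exp \<epsilon>1' * G' b + \<delta>1'" if "a \<in> \<Xi>" "(a, b) \<in> \<Phi>1" for a b
      using that approx_couplingD[OF iii[OF that] F01 G01 FG] by (auto simp: S_def F'_def G'_def)
  qed
  moreover have "expect \<mu>1 (\<lambda>a. indicator (- \<Xi>) a * max 0 (F' a - \<delta>2'))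
          \<le> exp (\<epsilon>2 + \<epsilon>2') * expect \<mu>2 (\<lambda>b. indicator (- S) b * G' b) + \<delta>2"
    using ii nonneg(8) F'01 G'01
  proof (rule approx_coupling_restrict_le)
    show "b \<in> - S \<and> F' a \<le> exp \<epsilon>2' * G' b + \<delta>2'" if "a \<in> - \<Xi>" "(a, b) \<in> \<Phi>2" for a b
      using that disj approx_couplingD[OF iv F01 G01 FG] by (auto simp: S_def F'_def G'_def)
  qed
  ultimately have "expect \<mu>1 F'
      \<le> exp (max (\<epsilon>1 + \<epsilon>1') (\<epsilon>2 + \<epsilon>2')) * expect \<mu>2 G' + (\<delta>1 + \<delta>2 + max \<delta>1' \<delta>2')"
    using F'01 G'01 nonneg(7,8) by (intro expect_le_by_partition)
  then show "expect (bind_spmf \<mu>1 f) F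
      \<le> exp (max (\<epsilon>1 + \<epsilon>1') (\<epsilon>2 + \<epsilon>2')) * expect (bind_spmf \<mu>2 g) G + (\<delta>1 + \<delta>2 + max \<delta>1' \<delta>2')"
    using F01 G01 by (simp add: expect_bind_spmf[where B=1] F'_def[abs_def] G'_def[abs_def])
qed

end
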